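(* Let $\epsilon>0$ and let $a,b,c,d\in\Lambda_+$ satisfy: (1) $ad-bc\neq0$; (2) $\mathrm{val}(a)\le\mathrm{val}(b),\mathrm{val}(c)$ and $\mathrm{val}(d)\le\mathrm{val}(b),\mathrm{val}(c)$; (3) $\mathrm{val}(a)+\mathrm{val}(d)<\mathrm{val}(b)+\mathrm{val}(c)$. Let $$F(z_1,z_2)=\Bigl(az_1+bz_2+\sum_{v}\lambda_vz^v,\ cz_1+dz_2+\sum_v\eta_vz^v\Bigr),$$ where $v=(v_1,v_2)$ ranges over $\mathbb Z_{\ge0}^2$ with $v_1+v_2\ge2$, $z^v=z_1^{v_1}z_2^{v_2}$, and the coefficients satisfy $\mathrm{val}(\lambda_v)\ge\mathrm{val}(a)$, $\mathrm{val}(\eta_v)\ge\mathrm{val}(d)$ for all $v$, and (4) $\mathrm{val}(\lambda_{(i,j)})\ge\mathrm{val}(d)$ whenever $j\ge1$ and $\mathrm{val}(\eta_{(i,j)})\ge\mathrm{val}(a)$ whenever $i\ge1$. Then for all $C_1,C_2\in\Lambda$ with $\mathrm{val}(C_1)>\mathrm{val}(a)+\epsilon$ and $\mathrm{val}(C_2)>\mathrm{val}(d)+\epsilon$, the equation $F(z_1,z_2)=(C_1,C_2)$ has a unique solution $(z_1,z_2)\in(T^\epsilon\Lambda_0)^2$.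
   Context: $\Lambda$ is the Novikov field $\{\sum_{i\ge0}c_iT^{\lambda_i}: c_i\in\mathbb C,\ \lambda_i\to\infty\}$, $\mathrm{val}(\sum c_iT^{\lambda_i})=\min\{\lambda_i:c_i\ne0\}$ (with $\mathrm{val}(0)=\infty$), $\Lambda_0=\{\mathrm{val}\ge0\}$, $\Lambda_+=\{\mathrm{val}>0\}$, and $T^\epsilon\Lambda_0=\{x:\mathrm{val}(x)\ge\epsilon\}$. The series defining $F$ converge in the $T$-adic topology on $(T^\epsilon\Lambda_0)^2$. *)

theory Defs
  imports Complex_Main "HOL-Library.Extended_Real"
begin

text \<open>Universal Novikov field, represented by coefficient functions:
  an element \<open>\<Sum> c_i T^{\<lambda>_i}\<close> is the function \<open>\<lambda> \<mapsto> c\<close> (coefficient of \<open>T^\<lambda>\<close>),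
  with finitely many nonzero coefficients below any bound (i.e. \<open>\<lambda>_i \<rightarrow> \<infinity>\<close>).\<close>

type_synonym nov = "real \<Rightarrow> complex"

definition novikov :: "nov set" where
  "novikov = {f. \<forall>R. finite {x. f x \<noteq> 0 \<and> x \<le> R}}"

definition nval :: "nov \<Rightarrow> ereal" where
  "nval f = (INF x\<in>{x. f x \<noteq> 0}. ereal x)"

definition nzero :: nov where "nzero = (\<lambda>x. 0)"

definition none :: nov where "none = (\<lambda>x. if x = 0 then 1 else 0)"

definition nadd :: "nov \<Rightarrow> nov \<Rightarrow> nov" where
  "nadd f g = (\<lambda>x. f x + g x)"

definition nmul :: "nov \<Rightarrow> nov \<Rightarrow> nov" where
  "nmul f g = (\<lambda>x. \<Sum>y\<in>{y. f y \<noteq> 0 \<and> g (x - y) \<noteq> 0}. f y * g (x - y))"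

definition npow :: "nov \<Rightarrow> nat \<Rightarrow> nov" where
  "npow f n = (nmul f ^^ n) none"

text \<open>Sum of a family of Novikov elements, taken coefficientwise (this is the T-adic
  limit whenever the family converges, i.e. valuations tend to infinity).\<close>
definition nsuminf :: "('i \<Rightarrow> nov) \<Rightarrow> nov" where
  "nsuminf t = (\<lambda>x. \<Sum>i\<in>{i. t i x \<noteq> 0}. t i x)"

definition Lambda0 :: "nov set" where
  "Lambda0 = {x \<in> novikov. nval x \<ge> 0}"

definition Lambda_plus :: "nov set" where
  "Lambda_plus = {x \<in> novikov. nval x > 0}"

definition TLambda0 :: "real \<Rightarrow> nov set" where
  "TLambda0 e = {x \<in> novikov. nval x \<ge> ereal e}"

definition nser :: "(nat \<times> nat \<Rightarrow> nov) \<Rightarrow> nov \<Rightarrow> nov \<Rightarrow> nov" where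
  "nser lam z1 z2 = nsuminf (\<lambda>v::nat \<times> nat. if 2 \<le> fst v + snd v
      then nmul (lam v) (nmul (npow z1 (fst v)) (npow z2 (snd v))) else nzero)"

definition novF :: "nov \<Rightarrow> nov \<Rightarrow> nov \<Rightarrow> nov \<Rightarrow> (nat \<times> nat \<Rightarrow> nov) \<Rightarrow> (nat \<times> nat \<Rightarrow> nov)
    \<Rightarrow> nov \<Rightarrow> nov \<Rightarrow> nov \<times> nov" where
  "novF a b c d lam eta z1 z2 =
     (nadd (nadd (nmul a z1) (nmul b z2)) (nser lam z1 z2),
      nadd (nadd (nmul c z1) (nmul d z2)) (nser eta z1 z2))"

end

theory Submission
  imports Defs
begin

(*
  With alpha T^A and delta T^D the leading terms of a and d, the solutions of F(z) = (C1, C2)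
  are the fixed points of
    z |-> (z1 + alpha^-1 T^-A (C1 - F1 z), z2 + delta^-1 T^-D (C2 - F2 z)).
  On (T^e Lambda_0)^2 this map raises the valuation of differences by a fixed amount, once the
  first coordinate is weighted by T^-t for a suitable t: the diagonal part cancels up to
  higher order, the off-diagonal terms gain by val a + val d < val b + val c, and the
  nonlinear terms gain at least e by the valuation conditions on their coefficients.
  As Lambda is complete for the T-adic topology, Banach's argument gives a unique fixed point.
*)

definition val_ge :: "real \<Rightarrow> nov \<Rightarrow> bool" where
  "val_ge B f \<longleftrightarrow> (\<forall>x. f x \<noteq> 0 \<longrightarrow> B \<le> x)"

lemma ereal_le_nval_iff: "ereal B \<le> nval f \<longleftrightarrow> val_ge B f"
  by (auto simp: nval_def val_ge_def le_INF_iff)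

lemma val_ge_mono: "val_ge B f \<Longrightarrow> B' \<le> B \<Longrightarrow> val_ge B' f"
  by (auto simp: val_ge_def)

lemma val_ge_zero_fun: "(\<And>x. f x = 0) \<Longrightarrow> val_ge B f"
  by (auto simp: val_ge_def)

lemma val_ge_add: "val_ge B f \<Longrightarrow> val_ge C g \<Longrightarrow> val_ge (min B C) (\<lambda>x. f x + g x)"
  unfolding val_ge_def by (metis add.right_neutral add_0 min.coboundedI1 min.coboundedI2)

lemma val_ge_diff: "val_ge B f \<Longrightarrow> val_ge C g \<Longrightarrow> val_ge (min B C) (\<lambda>x. f x - g x)"
  unfolding val_ge_def by (metis diff_0 diff_zero min.coboundedI1 min.coboundedI2 neg_equal_0_iff_equal)

lemma val_ge_neg: "val_ge B f \<Longrightarrow> val_ge B (\<lambda>x. - f x)"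
  unfolding val_ge_def by auto

lemma val_ge_none: "val_ge 0 none"
  by (auto simp: val_ge_def none_def)

lemma val_ge_shift: "val_ge B f \<Longrightarrow> val_ge (B - s) (\<lambda>y. c * f (y + s))"
  unfolding val_ge_def by force

lemma novikov_obtain_leading: assumes "f \<in> novikov" "f x0 \<noteq> 0"
  shows "\<exists>m. f m \<noteq> 0 \<and> val_ge m f"
proof -
  let ?S = "{x. f x \<noteq> 0 \<and> x \<le> x0}"
  have fin: "finite ?S" using assms by (auto simp: novikov_def)
  have ne: "x0 \<in> ?S" using assms by auto
  have m: "Min ?S \<in> ?S" using fin ne by (intro Min_in) auto
  have "val_ge (Min ?S) f"
    unfolding val_ge_def
  proof (intro allI impI)
    fix x assume "f x \<noteq> 0"
    show "Min ?S \<le> x"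
    proof (cases "x \<le> x0")
      case True then show ?thesis using fin \<open>f x \<noteq> 0\<close> by (intro Min_le) auto
    next
      case False then show ?thesis using fin ne Min_le[OF fin ne] by linarith
    qed
  qed
  then show ?thesis using m by blast
qed

lemma novikov_val_ge_ex: "f \<in> novikov \<Longrightarrow> \<exists>m. val_ge m f"
  using novikov_obtain_leading[of f] by (cases "\<exists>x0. f x0 \<noteq> 0") (auto simp: val_ge_def)

lemma nval_eq_ereal_leading: assumes "f \<in> novikov" "nval f = ereal A"
  shows "f A \<noteq> 0" "val_ge A f"
proof -
  have "val_ge A f" using assms(2) ereal_le_nval_iff[of A f] by simp
  have "\<exists>x0. f x0 \<noteq> 0"
  proof (rule ccontr)
    assume "\<not> ?thesis"
    then have "nval f = \<infinity>" by (simp add: nval_def top_ereal_def)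
    then show False using assms(2) by simp
  qed
  then obtain m where m: "f m \<noteq> 0" "val_ge m f" using novikov_obtain_leading assms(1) by blast
  have "ereal m \<le> nval f" using m(2) ereal_le_nval_iff by blast
  moreover have "nval f \<le> ereal m" using m(1) unfolding nval_def by (intro INF_lower) auto
  ultimately have "A = m" using assms(2) by simp
  then show "f A \<noteq> 0" using m by simp
  show "val_ge A f" by fact
qed

lemma novikov_val_ge_gap: assumes "f \<in> novikov" "val_ge t f" "f t = 0"
  shows "\<exists>\<theta>>0. val_ge (t + \<theta>) f"
proof (cases "\<exists>x0. f x0 \<noteq> 0")
  case False then show ?thesis by (intro exI[of _ 1]) (auto simp: val_ge_def)
next
  case True
  then obtain m where m: "f m \<noteq> 0" "val_ge m f" using novikov_obtain_leading assms(1) by blast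
  have "t \<le> m" using assms(2) m(1) by (auto simp: val_ge_def)
  moreover have "m \<noteq> t" using m(1) assms(3) by auto
  ultimately show ?thesis using m(2) by (intro exI[of _ "m - t"]) auto
qed

lemma novikovI: assumes "\<And>R. {x. f x \<noteq> 0 \<and> x \<le> R} \<subseteq> S R" "\<And>R. finite (S R)"
  shows "f \<in> novikov"
  unfolding novikov_def
proof (intro CollectI allI)
  fix R show "finite {x. f x \<noteq> 0 \<and> x \<le> R}" by (rule finite_subset[OF assms(1) assms(2)])
qed

lemma novikov_zero_fun[simp]: "(\<lambda>x. 0) \<in> novikov"
  by (simp add: novikov_def)

lemma novikov_nzero[simp]: "nzero \<in> novikov"
  by (simp add: novikov_def nzero_def)

lemma novikov_none[simp]: "none \<in> novikov"
  by (rule novikovI[of _ "\<lambda>R. {0}"]) (auto simp: none_def)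

lemma novikov_pointwise:
  assumes "f \<in> novikov" "g \<in> novikov" "\<And>x. h x \<noteq> 0 \<Longrightarrow> f x \<noteq> 0 \<or> g x \<noteq> 0"
  shows "h \<in> novikov"
proof (rule novikovI)
  show "{x. h x \<noteq> 0 \<and> x \<le> R} \<subseteq> {x. f x \<noteq> 0 \<and> x \<le> R} \<union> {x. g x \<noteq> 0 \<and> x \<le> R}" for R
    using assms(3) by auto
  show "finite ({x. f x \<noteq> 0 \<and> x \<le> R} \<union> {x. g x \<noteq> 0 \<and> x \<le> R})" for R
    using assms(1,2) by (simp add: novikov_def)
qed

lemma novikov_add: "f \<in> novikov \<Longrightarrow> g \<in> novikov \<Longrightarrow> (\<lambda>x. f x + g x) \<in> novikov"
  by (rule novikov_pointwise[of f g]) auto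

lemma novikov_diff: "f \<in> novikov \<Longrightarrow> g \<in> novikov \<Longrightarrow> (\<lambda>x. f x - g x) \<in> novikov"
  by (rule novikov_pointwise[of f g]) auto

lemma novikov_shift: assumes "f \<in> novikov" shows "(\<lambda>y. c * f (y + s)) \<in> novikov"
proof -
  have "{x. c * f (x + s) \<noteq> 0 \<and> x \<le> R} \<subseteq> (\<lambda>y. y - s) ` {y. f y \<noteq> 0 \<and> y \<le> R + s}" for R
  proof
    fix x assume "x \<in> {x. c * f (x + s) \<noteq> 0 \<and> x \<le> R}"
    then show "x \<in> (\<lambda>y. y - s) ` {y. f y \<noteq> 0 \<and> y \<le> R + s}"
      by (intro image_eqI[of _ _ "x + s"]) auto
  qed
  moreover have "finite ((\<lambda>y. y - s) ` {y. f y \<noteq> 0 \<and> y \<le> R + s})" for R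
    using assms by (simp add: novikov_def)
  ultimately show ?thesis by (rule novikovI)
qed

lemma finite_nmul_support: assumes "f \<in> novikov" "g \<in> novikov"
  shows "finite {y. f y \<noteq> 0 \<and> g (x - y) \<noteq> 0}"
proof -
  obtain m where m: "val_ge m g" using novikov_val_ge_ex assms(2) by blast
  have "{y. f y \<noteq> 0 \<and> g (x - y) \<noteq> 0} \<subseteq> {y. f y \<noteq> 0 \<and> y \<le> x - m}"
    using m by (auto simp: val_ge_def)
  moreover have "finite {y. f y \<noteq> 0 \<and> y \<le> x - m}" using assms(1) by (simp add: novikov_def)
  ultimately show ?thesis by (rule finite_subset)
qed

lemma nmul_eq_sum_superset: assumes "finite K" "\<And>y. f y \<noteq> 0 \<Longrightarrow> g (x - y) \<noteq> 0 \<Longrightarrow> y \<in> K"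
  shows "nmul f g x = (\<Sum>y\<in>K. f y * g (x - y))"
  unfolding nmul_def using assms by (intro sum.mono_neutral_left) auto

lemma nmul_nonzero_obtain: assumes "nmul f g x \<noteq> 0" shows "\<exists>y. f y \<noteq> 0 \<and> g (x - y) \<noteq> 0"
proof (rule ccontr)
  assume "\<not> ?thesis"
  then have e: "{y. f y \<noteq> 0 \<and> g (x - y) \<noteq> 0} = {}" by auto
  have "nmul f g x = 0" unfolding nmul_def e by simp
  then show False using assms by simp
qed

lemma val_ge_nmul: "val_ge B f \<Longrightarrow> val_ge C g \<Longrightarrow> val_ge (B + C) (nmul f g)"
  unfolding val_ge_def
proof (intro allI impI)
  fix x assume a: "\<forall>x. f x \<noteq> 0 \<longrightarrow> B \<le> x" "\<forall>x. g x \<noteq> 0 \<longrightarrow> C \<le> x" "nmul f g x \<noteq> 0"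
  then obtain y where "f y \<noteq> 0" "g (x - y) \<noteq> 0" using nmul_nonzero_obtain by blast
  then have "B \<le> y" "C \<le> x - y" using a(1,2) by auto
  then show "B + C \<le> x" by linarith
qed

lemma nmul_zero_right: "nmul f (\<lambda>_. 0) x = 0"
  by (simp add: nmul_def)
lemma nmul_zero_left: "nmul (\<lambda>_. 0) g x = 0"
  by (simp add: nmul_def)

lemma novikov_nmul: assumes "f \<in> novikov" "g \<in> novikov" shows "nmul f g \<in> novikov"
proof -
  obtain mf where mf: "val_ge mf f" using novikov_val_ge_ex assms(1) by blast
  obtain mg where mg: "val_ge mg g" using novikov_val_ge_ex assms(2) by blast
  have "{x. nmul f g x \<noteq> 0 \<and> x \<le> R} \<subseteq>
      (\<lambda>(y, w). y + w) ` ({y. f y \<noteq> 0 \<and> y \<le> R - mg} \<times> {w. g w \<noteq> 0 \<and> w \<le> R - mf})" for R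
  proof
    fix x assume "x \<in> {x. nmul f g x \<noteq> 0 \<and> x \<le> R}"
    then have x: "nmul f g x \<noteq> 0" "x \<le> R" by auto
    then obtain y where y: "f y \<noteq> 0" "g (x - y) \<noteq> 0" using nmul_nonzero_obtain by blast
    have "mg \<le> x - y" "mf \<le> y" using y mf mg by (auto simp: val_ge_def)
    then show "x \<in> (\<lambda>(y, w). y + w) ` ({y. f y \<noteq> 0 \<and> y \<le> R - mg} \<times> {w. g w \<noteq> 0 \<and> w \<le> R - mf})"
      using y x by (intro image_eqI[of _ _ "(y, x - y)"]) auto
  qed
  moreover have
    "finite ((\<lambda>(y, w). y + w) ` ({y. f y \<noteq> 0 \<and> y \<le> R - mg} \<times> {w. g w \<noteq> 0 \<and> w \<le> R - mf}))" for R
    using assms unfolding novikov_def by (intro finite_imageI finite_cartesian_product) auto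
  ultimately show ?thesis by (rule novikovI)
qed

lemma nmul_add_right: assumes "f \<in> novikov" "g \<in> novikov" "h \<in> novikov"
  shows "nmul f (\<lambda>y. g y + h y) x = nmul f g x + nmul f h x"
proof -
  let ?K = "{y. f y \<noteq> 0 \<and> g (x - y) \<noteq> 0} \<union> {y. f y \<noteq> 0 \<and> h (x - y) \<noteq> 0}"
  have fin: "finite ?K" using finite_nmul_support assms by auto
  have "nmul f (\<lambda>y. g y + h y) x = (\<Sum>y\<in>?K. f y * (g (x - y) + h (x - y)))"
    by (rule nmul_eq_sum_superset[OF fin]) auto
  also have "\<dots> = (\<Sum>y\<in>?K. f y * g (x - y)) + (\<Sum>y\<in>?K. f y * h (x - y))"
    by (simp add: distrib_left sum.distrib)
  also have "\<dots> = nmul f g x + nmul f h x"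
    by (simp add: nmul_eq_sum_superset[OF fin])
  finally show ?thesis .
qed

lemma nmul_diff_right: assumes "f \<in> novikov" "g \<in> novikov" "h \<in> novikov"
  shows "nmul f (\<lambda>y. g y - h y) x = nmul f g x - nmul f h x"
proof -
  let ?K = "{y. f y \<noteq> 0 \<and> g (x - y) \<noteq> 0} \<union> {y. f y \<noteq> 0 \<and> h (x - y) \<noteq> 0}"
  have fin: "finite ?K" using finite_nmul_support assms by auto
  have "nmul f (\<lambda>y. g y - h y) x = (\<Sum>y\<in>?K. f y * (g (x - y) - h (x - y)))"
    by (rule nmul_eq_sum_superset[OF fin]) auto
  also have "\<dots> = (\<Sum>y\<in>?K. f y * g (x - y)) - (\<Sum>y\<in>?K. f y * h (x - y))"
    by (simp add: right_diff_distrib sum_subtractf)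
  also have "\<dots> = nmul f g x - nmul f h x"
    by (simp add: nmul_eq_sum_superset[OF fin])
  finally show ?thesis .
qed

lemma nmul_diff_left: assumes "f \<in> novikov" "g \<in> novikov" "h \<in> novikov"
  shows "nmul (\<lambda>y. f y - h y) g x = nmul f g x - nmul h g x"
proof -
  let ?K = "{y. f y \<noteq> 0 \<and> g (x - y) \<noteq> 0} \<union> {y. h y \<noteq> 0 \<and> g (x - y) \<noteq> 0}"
  have fin: "finite ?K" using finite_nmul_support assms by auto
  have "nmul (\<lambda>y. f y - h y) g x = (\<Sum>y\<in>?K. (f y - h y) * g (x - y))"
    by (rule nmul_eq_sum_superset[OF fin]) auto
  also have "\<dots> = (\<Sum>y\<in>?K. f y * g (x - y)) - (\<Sum>y\<in>?K. h y * g (x - y))"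
    by (simp add: left_diff_distrib sum_subtractf)
  also have "\<dots> = nmul f g x - nmul h g x"
    by (simp add: nmul_eq_sum_superset[OF fin])
  finally show ?thesis .
qed

lemma nmul_diff_nmul:
  assumes "p \<in> novikov" "q \<in> novikov" "p' \<in> novikov" "q' \<in> novikov"
  shows "nmul p q x - nmul p' q' x = nmul (\<lambda>y. p y - p' y) q x + nmul p' (\<lambda>y. q y - q' y) x"
  unfolding nmul_diff_left[OF assms(1,2,3)] nmul_diff_right[OF assms(3,2,4)] by simp

lemma nmul_none_left: "nmul none g x = g x"
proof (cases "g x = 0")
  case True
  have e: "{y. none y \<noteq> 0 \<and> g (x - y) \<noteq> 0} = {}" using True by (auto simp: none_def)
  show ?thesis unfolding nmul_def e using True by simp
next
  case False
  have "{y. none y \<noteq> 0 \<and> g (x - y) \<noteq> 0} = {0}" using False by (auto simp: none_def)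
  then show ?thesis by (simp add: nmul_def none_def)
qed

lemma nmul_shift: "nmul (\<lambda>y. c * f (y + s)) g x = c * nmul f g (x + s)"
proof (cases "c = 0")
  case True then show ?thesis by (simp add: nmul_def)
next
  case False
  let ?I = "{u. f u \<noteq> 0 \<and> g (x + s - u) \<noteq> 0}"
  have eq: "{y. c * f (y + s) \<noteq> 0 \<and> g (x - y) \<noteq> 0} = (\<lambda>u. u - s) ` ?I"
  proof
    show "{y. c * f (y + s) \<noteq> 0 \<and> g (x - y) \<noteq> 0} \<subseteq> (\<lambda>u. u - s) ` ?I"
    proof
      fix y assume "y \<in> {y. c * f (y + s) \<noteq> 0 \<and> g (x - y) \<noteq> 0}"
      then show "y \<in> (\<lambda>u. u - s) ` ?I" by (intro image_eqI[of _ _ "y + s"]) (auto simp: algebra_simps)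
    qed
  next
    show "(\<lambda>u. u - s) ` ?I \<subseteq> {y. c * f (y + s) \<noteq> 0 \<and> g (x - y) \<noteq> 0}"
      using False by (auto simp: algebra_simps)
  qed
  have "nmul (\<lambda>y. c * f (y + s)) g x = (\<Sum>u\<in>?I. c * f (u - s + s) * g (x - (u - s)))"
    unfolding nmul_def eq by (subst sum.reindex) (auto simp: inj_on_def)
  also have "\<dots> = c * (\<Sum>u\<in>?I. f u * g (x + s - u))"
    by (simp add: sum_distrib_left algebra_simps)
  also have "\<dots> = c * nmul f g (x + s)" by (simp add: nmul_def)
  finally show ?thesis .
qed

lemma npow_0[simp]: "npow f 0 = none" by (simp add: npow_def)
lemma npow_Suc: "npow f (Suc n) = nmul f (npow f n)" by (simp add: npow_def)

lemma novikov_npow: "f \<in> novikov \<Longrightarrow> npow f n \<in> novikov"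
  by (induction n) (auto simp: npow_Suc intro: novikov_nmul)

lemma val_ge_npow: assumes "val_ge e f" shows "val_ge (real n * e) (npow f n)"
proof (induction n)
  case 0 then show ?case using val_ge_none by simp
next
  case (Suc n)
  have "val_ge (e + real n * e) (npow f (Suc n))" unfolding npow_Suc by (rule val_ge_nmul[OF assms Suc])
  then show ?case by (simp add: algebra_simps)
qed

lemma val_ge_npow_diff:
  assumes "z \<in> novikov" "w \<in> novikov" "val_ge e z" "val_ge e w" "val_ge r (\<lambda>x. z x - w x)"
  shows "val_ge (r + (real n - 1) * e) (\<lambda>x. npow z n x - npow w n x)"
proof (induction n)
  case 0 then show ?case by (intro val_ge_zero_fun) simp
next
  case (Suc n)
  have nz: "npow z n \<in> novikov" "npow w n \<in> novikov" using assms novikov_npow by auto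
  have eq: "(\<lambda>x. npow z (Suc n) x - npow w (Suc n) x) =
    (\<lambda>x. nmul (\<lambda>y. z y - w y) (npow z n) x + nmul w (\<lambda>y. npow z n y - npow w n y) x)"
    unfolding npow_Suc using nmul_diff_nmul[OF assms(1) nz(1) assms(2) nz(2)] by simp
  have l1: "val_ge (r + real n * e) (nmul (\<lambda>y. z y - w y) (npow z n))"
    by (rule val_ge_nmul[OF assms(5) val_ge_npow[OF assms(3)]])
  have l2: "val_ge (e + (r + (real n - 1) * e)) (nmul w (\<lambda>y. npow z n y - npow w n y))"
    by (rule val_ge_nmul[OF assms(4) Suc])
  have "val_ge (min (r + real n * e) (e + (r + (real n - 1) * e))) (\<lambda>x. npow z (Suc n) x - npow w (Suc n) x)"
    unfolding eq by (rule val_ge_add[OF l1 l2])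
  then show ?case by (rule val_ge_mono) (simp add: algebra_simps)
qed

lemma nsuminf_nonzero_obtain: assumes "nsuminf t x \<noteq> 0" shows "\<exists>i. t i x \<noteq> 0"
proof (rule ccontr)
  assume "\<not> ?thesis"
  then have e: "{i. t i x \<noteq> 0} = {}" by auto
  have "nsuminf t x = 0" unfolding nsuminf_def e by simp
  then show False using assms by simp
qed

lemma val_ge_nsuminf: "(\<And>i. val_ge B (t i)) \<Longrightarrow> val_ge B (nsuminf t)"
  unfolding val_ge_def using nsuminf_nonzero_obtain by metis

lemma nsuminf_eq_sum_superset: assumes "finite K" "\<And>i. t i x \<noteq> 0 \<Longrightarrow> i \<in> K"
  shows "nsuminf t x = (\<Sum>i\<in>K. t i x)"
  unfolding nsuminf_def using assms by (intro sum.mono_neutral_left) auto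

definition nterm :: "(nat \<times> nat \<Rightarrow> nov) \<Rightarrow> nov \<Rightarrow> nov \<Rightarrow> nat \<times> nat \<Rightarrow> nov" where
  "nterm lam z1 z2 v = (if 2 \<le> fst v + snd v
      then nmul (lam v) (nmul (npow z1 (fst v)) (npow z2 (snd v))) else nzero)"

lemma nser_nterm: "nser lam z1 z2 = nsuminf (nterm lam z1 z2)"
  unfolding nser_def nterm_def by simp

lemma val_ge_nterm: assumes "\<And>v. 2 \<le> fst v + snd v \<Longrightarrow> val_ge P (lam v)" "val_ge e z1" "val_ge e z2"
  shows "val_ge (P + real (fst v + snd v) * e) (nterm lam z1 z2 v)"
proof (cases "2 \<le> fst v + snd v")
  case True
  have "val_ge (P + (real (fst v) * e + real (snd v) * e)) (nterm lam z1 z2 v)"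
    unfolding nterm_def using True
    by (simp add: val_ge_nmul assms val_ge_npow)
  then show ?thesis by (simp add: algebra_simps)
next
  case False then show ?thesis by (intro val_ge_zero_fun) (simp add: nterm_def nzero_def)
qed

lemma novikov_nterm: assumes "\<And>v. 2 \<le> fst v + snd v \<Longrightarrow> lam v \<in> novikov" "z1 \<in> novikov" "z2 \<in> novikov"
  shows "nterm lam z1 z2 v \<in> novikov"
  using assms(1)[of v] novikov_nmul[OF _ novikov_nmul[OF novikov_npow[OF assms(2)] novikov_npow[OF assms(3)]]]
  unfolding nterm_def by simp

lemma le_nat_ceiling: "real k \<le> y \<Longrightarrow> k \<le> nat \<lceil>y\<rceil>"
  by (metis ceiling_mono ceiling_of_nat nat_int nat_mono)

lemma nterm_nonzero_index_bound:
  assumes "val_ge (P + real (fst v + snd v) * e) (nterm lam z1 z2 v)" "P \<ge> 0" "e > 0"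
    "nterm lam z1 z2 v x \<noteq> 0" "x \<le> R"
  shows "v \<in> {..nat \<lceil>R / e\<rceil>} \<times> {..nat \<lceil>R / e\<rceil>}"
proof -
  have "P + real (fst v + snd v) * e \<le> x" using assms(1,4) by (auto simp: val_ge_def)
  then have h: "real (fst v + snd v) * e \<le> R" using assms by linarith
  have "real (fst v) * e \<le> real (fst v + snd v) * e" "real (snd v) * e \<le> real (fst v + snd v) * e"
    using assms(3) by (auto intro!: mult_right_mono)
  then have "real (fst v) * e \<le> R" "real (snd v) * e \<le> R" using h by linarith+
  then have "real (fst v) \<le> R / e" "real (snd v) \<le> R / e"
    using assms(3) by (auto simp: pos_le_divide_eq)
  then show ?thesis by (cases v) (auto intro!: le_nat_ceiling)
qed

lemma novikov_nser:
  assumes "\<And>v. 2 \<le> fst v + snd v \<Longrightarrow> lam v \<in> novikov \<and> val_ge P (lam v)" "P \<ge> 0" "e > 0"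
    "z1 \<in> novikov" "z2 \<in> novikov" "val_ge e z1" "val_ge e z2"
  shows "nser lam z1 z2 \<in> novikov"
proof -
  have tl: "val_ge (P + real (fst v + snd v) * e) (nterm lam z1 z2 v)" for v
    by (rule val_ge_nterm) (use assms in auto)
  have tn: "nterm lam z1 z2 v \<in> novikov" for v
    by (rule novikov_nterm) (use assms in auto)
  let ?S = "\<lambda>R. \<Union>v\<in>{..nat \<lceil>R / e\<rceil>} \<times> {..nat \<lceil>R / e\<rceil>}.
    {x. nterm lam z1 z2 v x \<noteq> 0 \<and> x \<le> R}"
  show ?thesis
  proof (rule novikovI[of _ ?S])
    fix R
    show "{x. nser lam z1 z2 x \<noteq> 0 \<and> x \<le> R} \<subseteq> ?S R"
    proof
      fix x assume "x \<in> {x. nser lam z1 z2 x \<noteq> 0 \<and> x \<le> R}"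
      then have x: "nsuminf (nterm lam z1 z2) x \<noteq> 0" "x \<le> R" by (auto simp: nser_nterm)
      then obtain v where v: "nterm lam z1 z2 v x \<noteq> 0" using nsuminf_nonzero_obtain by blast
      have "v \<in> {..nat \<lceil>R / e\<rceil>} \<times> {..nat \<lceil>R / e\<rceil>}"
        by (rule nterm_nonzero_index_bound[OF tl assms(2,3) v x(2)])
      then show "x \<in> ?S R" using v x by blast
    qed
    show "finite (?S R)"
      using tn by (intro finite_UN_I) (auto simp: novikov_def)
  qed
qed

lemma val_ge_nser:
  assumes "\<And>v. 2 \<le> fst v + snd v \<Longrightarrow> val_ge P (lam v)" "e \<ge> 0" "val_ge e z1" "val_ge e z2"
  shows "val_ge (P + 2 * e) (nser lam z1 z2)"
  unfolding nser_nterm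
proof (rule val_ge_nsuminf)
  fix v
  show "val_ge (P + 2 * e) (nterm lam z1 z2 v)"
  proof (cases "2 \<le> fst v + snd v")
    case True
    have "val_ge (P + real (fst v + snd v) * e) (nterm lam z1 z2 v)"
      by (rule val_ge_nterm) (use assms in auto)
    moreover have "2 * e \<le> real (fst v + snd v) * e"
      using True assms(2) by (intro mult_right_mono) auto
    ultimately show ?thesis by (elim val_ge_mono) linarith
  next
    case False then show ?thesis by (intro val_ge_zero_fun) (simp add: nterm_def nzero_def)
  qed
qed

lemma val_ge_nterm_diff:
  assumes e: "e > 0"
    and z: "z1 \<in> novikov" "z2 \<in> novikov" "w1 \<in> novikov" "w2 \<in> novikov"
    "val_ge e z1" "val_ge e z2" "val_ge e w1" "val_ge e w2"
    and r: "val_ge r1 (\<lambda>x. z1 x - w1 x)" "val_ge r2 (\<lambda>x. z2 x - w2 x)"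
    and L: "\<And>v. 2 \<le> fst v + snd v \<Longrightarrow> lam v \<in> novikov"
    and P: "\<And>i j. 2 \<le> i + j \<Longrightarrow> 1 \<le> i \<Longrightarrow> val_ge P (lam (i, j))"
    and Q: "\<And>i j. 2 \<le> i + j \<Longrightarrow> 1 \<le> j \<Longrightarrow> val_ge Q (lam (i, j))"
  shows "val_ge (min (P + e + r1) (Q + e + r2)) (\<lambda>x. nterm lam z1 z2 v x - nterm lam w1 w2 v x)"
proof (cases "2 \<le> fst v + snd v")
  case False then show ?thesis by (intro val_ge_zero_fun) (simp add: nterm_def)
next
  case True
  \<comment> \<open>Telescoping; as \<open>i + j \<ge> 2\<close>, each term keeps a further factor of valuation \<open>\<ge> e\<close>.\<close>
  obtain i j where v: "v = (i, j)" by (cases v)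
  have ij: "2 \<le> i + j" using True v by simp
  let ?L = "lam (i, j)"
  let ?p = "npow z1 i" and ?q = "npow z2 j" and ?p' = "npow w1 i" and ?q' = "npow w2 j"
  let ?T1 = "nmul (\<lambda>y. ?p y - ?p' y) ?q" and ?T2 = "nmul ?p' (\<lambda>y. ?q y - ?q' y)"
  have nov: "?L \<in> novikov" "?p \<in> novikov" "?q \<in> novikov" "?p' \<in> novikov" "?q' \<in> novikov"
    using L ij z novikov_npow by auto
  have eq: "nterm lam z1 z2 v x - nterm lam w1 w2 v x = nmul ?L ?T1 x + nmul ?L ?T2 x" for x
  proof -
    have "nterm lam z1 z2 v x - nterm lam w1 w2 v x = nmul ?L (\<lambda>y. nmul ?p ?q y - nmul ?p' ?q' y) x"
      using True v nov by (simp add: nterm_def nmul_diff_right novikov_nmul)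
    also have "\<dots> = nmul ?L (\<lambda>y. ?T1 y + ?T2 y) x"
      by (simp add: nmul_diff_nmul nov)
    also have "\<dots> = nmul ?L ?T1 x + nmul ?L ?T2 x"
      using nov by (simp add: nmul_add_right novikov_nmul novikov_diff)
    finally show ?thesis .
  qed
  have "val_ge (P + e + r1) (nmul ?L ?T1)"
  proof (cases "i = 0")
    case True
    then have "?T1 = (\<lambda>_. 0)" by (simp add: fun_eq_iff nmul_zero_left)
    then show ?thesis by (simp add: nmul_zero_right val_ge_zero_fun)
  next
    case False
    have "val_ge (P + ((r1 + (real i - 1) * e) + real j * e)) (nmul ?L ?T1)"
      by (intro val_ge_nmul P val_ge_npow_diff val_ge_npow) (use ij False z r in auto)
    moreover have "1 * e \<le> (real i - 1 + real j) * e"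
      using ij e by (intro mult_right_mono) auto
    ultimately show ?thesis by (elim val_ge_mono) (simp add: algebra_simps)
  qed
  moreover have "val_ge (Q + e + r2) (nmul ?L ?T2)"
  proof (cases "j = 0")
    case True
    then have "?T2 = (\<lambda>_. 0)" by (simp add: fun_eq_iff nmul_zero_right)
    then show ?thesis by (simp add: nmul_zero_right val_ge_zero_fun)
  next
    case False
    have "val_ge (Q + (real i * e + (r2 + (real j - 1) * e))) (nmul ?L ?T2)"
      by (intro val_ge_nmul Q val_ge_npow_diff val_ge_npow) (use ij False z r in auto)
    moreover have "1 * e \<le> (real i - 1 + real j) * e"
      using ij e by (intro mult_right_mono) auto
    ultimately show ?thesis by (elim val_ge_mono) (simp add: algebra_simps)
  qed
  ultimately show ?thesis unfolding eq by (rule val_ge_add)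
qed

lemma val_ge_nser_diff:
  assumes e: "e > 0"
    and z: "z1 \<in> novikov" "z2 \<in> novikov" "w1 \<in> novikov" "w2 \<in> novikov"
    "val_ge e z1" "val_ge e z2" "val_ge e w1" "val_ge e w2"
    and r: "val_ge r1 (\<lambda>x. z1 x - w1 x)" "val_ge r2 (\<lambda>x. z2 x - w2 x)"
    and L: "\<And>v. 2 \<le> fst v + snd v \<Longrightarrow> lam v \<in> novikov \<and> val_ge 0 (lam v)"
    and P: "\<And>i j. 2 \<le> i + j \<Longrightarrow> 1 \<le> i \<Longrightarrow> val_ge P (lam (i, j))"
    and Q: "\<And>i j. 2 \<le> i + j \<Longrightarrow> 1 \<le> j \<Longrightarrow> val_ge Q (lam (i, j))"
  shows "val_ge (min (P + e + r1) (Q + e + r2)) (\<lambda>x. nser lam z1 z2 x - nser lam w1 w2 x)"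
  unfolding val_ge_def
proof (intro allI impI)
  fix x assume nz: "nser lam z1 z2 x - nser lam w1 w2 x \<noteq> 0"
  let ?K = "{..nat \<lceil>x / e\<rceil>} \<times> {..nat \<lceil>x / e\<rceil>}"
  have tlz: "val_ge (0 + real (fst v + snd v) * e) (nterm lam z1 z2 v)" for v
    by (rule val_ge_nterm) (use L z in auto)
  have tlw: "val_ge (0 + real (fst v + snd v) * e) (nterm lam w1 w2 v)" for v
    by (rule val_ge_nterm) (use L z in auto)
  have Kz: "v \<in> ?K" if "nterm lam z1 z2 v x \<noteq> 0" for v
    by (rule nterm_nonzero_index_bound[OF tlz _ e that]) auto
  have Kw: "v \<in> ?K" if "nterm lam w1 w2 v x \<noteq> 0" for v
    by (rule nterm_nonzero_index_bound[OF tlw _ e that]) auto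
  have sz: "nsuminf (nterm lam z1 z2) x = (\<Sum>v\<in>?K. nterm lam z1 z2 v x)"
    by (rule nsuminf_eq_sum_superset[OF _ Kz]) simp_all
  have sw: "nsuminf (nterm lam w1 w2) x = (\<Sum>v\<in>?K. nterm lam w1 w2 v x)"
    by (rule nsuminf_eq_sum_superset[OF _ Kw]) simp_all
  have "nser lam z1 z2 x - nser lam w1 w2 x = (\<Sum>v\<in>?K. nterm lam z1 z2 v x - nterm lam w1 w2 v x)"
    unfolding nser_nterm sz sw by (simp add: sum_subtractf)
  with nz obtain v where v: "nterm lam z1 z2 v x - nterm lam w1 w2 v x \<noteq> 0"
    by (metis (no_types, lifting) sum.neutral)
  have "val_ge (min (P + e + r1) (Q + e + r2)) (\<lambda>x. nterm lam z1 z2 v x - nterm lam w1 w2 v x)"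
    by (rule val_ge_nterm_diff[OF e z r]) (use L P Q in auto)
  then show "min (P + e + r1) (Q + e + r2) \<le> x" using v by (auto simp: val_ge_def)
qed

lemma val_ge_unbounded_zero: assumes "\<kappa> > 0" "\<And>n. val_ge (K + real n * \<kappa>) f" shows "f x = 0"
proof (rule ccontr)
  assume nz: "f x \<noteq> 0"
  obtain n where n: "(x - K) / \<kappa> < real n" using reals_Archimedean2 by blast
  have "K + real n * \<kappa> \<le> x" using assms(2)[of n] nz by (auto simp: val_ge_def)
  moreover have "x - K < real n * \<kappa>" using n assms(1) by (simp add: pos_divide_less_eq)
  ultimately show False by linarith
qed

lemma TLambda0_iff: "x \<in> TLambda0 e \<longleftrightarrow> x \<in> novikov \<and> val_ge e x"
  by (auto simp: TLambda0_def ereal_le_nval_iff)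

lemma geometric_diff_stable:
  assumes "\<kappa> > 0" "\<And>n. val_ge (K + real n * \<kappa>) (\<lambda>x. u (Suc n) x - u n x)"
    and "x < K + real n * \<kappa>" "n \<le> m"
  shows "u m x = u n x"
proof -
  have "u (n + k) x = u n x" for k
  proof (induction k)
    case (Suc k)
    have "K + real n * \<kappa> \<le> K + real (n + k) * \<kappa>"
      using assms(1) by (intro add_left_mono mult_right_mono) auto
    then have "u (Suc (n + k)) x - u (n + k) x = 0"
      using assms(2)[of "n + k"] assms(3) by (force simp: val_ge_def)
    then show ?case using Suc by simp
  qed simp
  from this[of "m - n"] show ?thesis using assms(4) by simp
qed

lemma novikov_geometric_limit:
  assumes "\<kappa> > 0" "\<And>n. u n \<in> TLambda0 e"
    and d: "\<And>n. val_ge (K + real n * \<kappa>) (\<lambda>x. u (Suc n) x - u n x)"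
  obtains w where "w \<in> TLambda0 e" "\<And>n. val_ge (K + real n * \<kappa>) (\<lambda>x. w x - u n x)"
proof -
  have stable: "u n x = u m x" if "x < K + real n * \<kappa>" "x < K + real m * \<kappa>" for n m x
    using geometric_diff_stable[OF assms(1) d] that by (metis nat_le_linear)
  define N where "N x = nat \<lceil>(x - K) / \<kappa>\<rceil> + 1" for x
  have N: "x < K + real (N x) * \<kappa>" for x
  proof -
    have "(x - K) / \<kappa> < real (N x)"
      unfolding N_def using real_nat_ceiling_ge[of "(x - K) / \<kappa>"] by simp
    then show ?thesis using assms(1) by (simp add: pos_divide_less_eq)
  qed
  define w where "w x = u (N x) x" for x
  have w_eq: "w x = u n x" if "x < K + real n * \<kappa>" for x n
    unfolding w_def using stable[OF N that] .
  have "w \<in> novikov"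
  proof (rule novikovI)
    show "{x. w x \<noteq> 0 \<and> x \<le> R} \<subseteq> {x. u (N R) x \<noteq> 0 \<and> x \<le> R}" for R
    proof
      fix x assume "x \<in> {x. w x \<noteq> 0 \<and> x \<le> R}"
      with N[of R] w_eq[of x "N R"] show "x \<in> {x. u (N R) x \<noteq> 0 \<and> x \<le> R}" by simp
    qed
    show "finite {x. u (N R) x \<noteq> 0 \<and> x \<le> R}" for R
      using assms(2)[of "N R"] by (simp add: TLambda0_iff novikov_def)
  qed
  moreover have "val_ge e w"
    using assms(2) unfolding w_def by (simp add: TLambda0_iff val_ge_def)
  moreover have "val_ge (K + real n * \<kappa>) (\<lambda>x. w x - u n x)" for n
    using w_eq[of _ n] by (force simp: val_ge_def)
  ultimately show ?thesis using that by (simp add: TLambda0_iff)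
qed

text \<open>Shifting the argument by \<open>A\<close> is multiplication by \<open>T\<^sup>-\<^sup>A\<close>.\<close>

definition diag_step :: "complex \<Rightarrow> real \<Rightarrow> nov \<Rightarrow> nov \<Rightarrow> nov \<Rightarrow> nov" where
  "diag_step \<alpha> A C F u = (\<lambda>x. u x + (1 / \<alpha>) * (C (x + A) - F (x + A)))"

lemma diag_step_diff:
  assumes n: "p \<in> novikov" "q \<in> novikov" "u \<in> novikov" "u' \<in> novikov" "v \<in> novikov" "v' \<in> novikov"
  shows "diag_step \<alpha> A C (\<lambda>y. nmul p u y + nmul q v y + N y) u x
      - diag_step \<alpha> A C (\<lambda>y. nmul p u' y + nmul q v' y + N' y) u' x
   = - nmul (\<lambda>y. (1 / \<alpha>) * p (y + A) - none y) (\<lambda>y. u y - u' y) x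
     - nmul (\<lambda>y. (1 / \<alpha>) * q (y + A)) (\<lambda>y. v y - v' y) x - (1 / \<alpha>) * (N (x + A) - N' (x + A))"
proof -
  let ?ph = "\<lambda>y. (1 / \<alpha>) * p (y + A)"
  let ?qh = "\<lambda>y. (1 / \<alpha>) * q (y + A)"
  have phn: "?ph \<in> novikov" "?qh \<in> novikov" by (rule novikov_shift[OF n(1)], rule novikov_shift[OF n(2)])
  have phn': "(\<lambda>y. ?ph y - none y) \<in> novikov" using phn by (intro novikov_diff) auto
  have e1: "nmul (\<lambda>y. ?ph y - none y) (\<lambda>y. u y - u' y) x
      = nmul (\<lambda>y. ?ph y - none y) u x - nmul (\<lambda>y. ?ph y - none y) u' x"
    by (rule nmul_diff_right[OF phn' n(3,4)])
  have e2: "nmul (\<lambda>y. ?ph y - none y) u x = nmul ?ph u x - u x"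
    using nmul_diff_left[OF phn(1) n(3) novikov_none] nmul_none_left by simp
  have e3: "nmul (\<lambda>y. ?ph y - none y) u' x = nmul ?ph u' x - u' x"
    using nmul_diff_left[OF phn(1) n(4) novikov_none] nmul_none_left by simp
  have e4: "nmul ?qh (\<lambda>y. v y - v' y) x = nmul ?qh v x - nmul ?qh v' x"
    by (rule nmul_diff_right[OF phn(2) n(5,6)])
  show ?thesis
    unfolding e1 e2 e3 e4 nmul_shift diag_step_def
    by (simp add: algebra_simps nmul_diff_right[OF n(2) n(5,6)] diff_divide_distrib)
qed

lemma val_ge_diag_step_diff:
  assumes n: "p \<in> novikov" "q \<in> novikov" "u \<in> novikov" "u' \<in> novikov" "v \<in> novikov" "v' \<in> novikov"
    and th: "val_ge \<theta> (\<lambda>y. (1 / \<alpha>) * p (y + A) - none y)" and bq: "val_ge \<beta> q"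
    and r: "val_ge r1 (\<lambda>x. u x - u' x)" "val_ge r2 (\<lambda>x. v x - v' x)" and bn: "val_ge Bn (\<lambda>x. N x - N' x)"
  shows "val_ge (min (min (\<theta> + r1) (\<beta> - A + r2)) (Bn - A))
    (\<lambda>x. diag_step \<alpha> A C (\<lambda>y. nmul p u y + nmul q v y + N y) u x
      - diag_step \<alpha> A C (\<lambda>y. nmul p u' y + nmul q v' y + N' y) u' x)"
proof -
  have l1: "val_ge (\<theta> + r1) (\<lambda>x. - nmul (\<lambda>y. (1 / \<alpha>) * p (y + A) - none y) (\<lambda>y. u y - u' y) x)"
    by (intro val_ge_neg val_ge_nmul th r)
  have l2: "val_ge (\<beta> - A + r2) (nmul (\<lambda>y. (1 / \<alpha>) * q (y + A)) (\<lambda>y. v y - v' y))"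
    by (intro val_ge_nmul val_ge_shift bq r)
  have l3: "val_ge (Bn - A) (\<lambda>x. (1 / \<alpha>) * (N (x + A) - N' (x + A)))"
    using val_ge_shift[OF bn, of A "1 / \<alpha>"] by simp
  show ?thesis
    unfolding diag_step_diff[OF n] by (intro val_ge_diff l1 l2 l3)
qed

lemma val_ge_diag_step:
  assumes n: "p \<in> novikov" "q \<in> novikov" "u \<in> novikov" "v \<in> novikov"
    and th: "val_ge \<theta> (\<lambda>y. (1 / \<alpha>) * p (y + A) - none y)" "\<theta> \<ge> 0" and bq: "val_ge \<beta> q" "\<beta> \<ge> A"
    and r: "val_ge e u" "val_ge e v" and bn: "val_ge (A + 2 * e) N" and bc: "val_ge (A + e) C" and e: "e > 0"
  shows "val_ge e (diag_step \<alpha> A C (\<lambda>y. nmul p u y + nmul q v y + N y) u)"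
proof -
  let ?G0 = "diag_step \<alpha> A C (\<lambda>y. nmul p (\<lambda>_. 0) y + nmul q (\<lambda>_. 0) y + (\<lambda>_. 0) y) (\<lambda>_. 0)"
  have g0: "?G0 = (\<lambda>x. (1 / \<alpha>) * C (x + A))"
    by (simp add: diag_step_def nmul_zero_right)
  have l0: "val_ge (A + e - A) ?G0" unfolding g0 by (rule val_ge_shift[OF bc])
  have l1: "val_ge (min (min (\<theta> + e) (\<beta> - A + e)) (A + 2 * e - A))
     (\<lambda>x. diag_step \<alpha> A C (\<lambda>y. nmul p u y + nmul q v y + N y) u x - ?G0 x)"
    by (rule val_ge_diag_step_diff) (use n r bn th bq in auto)
  have "val_ge (min (A + e - A) (min (min (\<theta> + e) (\<beta> - A + e)) (A + 2 * e - A)))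
     (\<lambda>x. ?G0 x + (diag_step \<alpha> A C (\<lambda>y. nmul p u y + nmul q v y + N y) u x - ?G0 x))"
    by (rule val_ge_add[OF l0 l1])
  moreover have "(\<lambda>x. ?G0 x + (diag_step \<alpha> A C (\<lambda>y. nmul p u y + nmul q v y + N y) u x - ?G0 x))
     = diag_step \<alpha> A C (\<lambda>y. nmul p u y + nmul q v y + N y) u" by (rule ext) simp
  ultimately have "val_ge (min (A + e - A) (min (min (\<theta> + e) (\<beta> - A + e)) (A + 2 * e - A)))
     (diag_step \<alpha> A C (\<lambda>y. nmul p u y + nmul q v y + N y) u)" by simp
  then show ?thesis
    by (elim val_ge_mono) (use th bq e in auto)
qed

lemma novikov_diag_step: assumes "u \<in> novikov" "C \<in> novikov" "F \<in> novikov"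
  shows "diag_step \<alpha> A C F u \<in> novikov"
proof -
  have "(\<lambda>y. (1 / \<alpha>) * (\<lambda>x. C x - F x) (y + A)) \<in> novikov"
    by (rule novikov_shift[OF novikov_diff[OF assms(2,3)]])
  then have "(\<lambda>y. (1 / \<alpha>) * (C (y + A) - F (y + A))) \<in> novikov" by simp
  from novikov_add[OF assms(1) this] show ?thesis unfolding diag_step_def .
qed

lemma diag_step_fixed_iff: "diag_step \<alpha> A C F u = u \<longleftrightarrow> (\<alpha> = 0 \<or> C = F)"
proof
  assume h: "diag_step \<alpha> A C F u = u"
  show "\<alpha> = 0 \<or> C = F"
  proof (cases "\<alpha> = 0")
    case False
    have "C y = F y" for y
    proof -
      have "diag_step \<alpha> A C F u (y - A) = u (y - A)" using h by simp
      then show ?thesis using False by (simp add: diag_step_def)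
    qed
    then show ?thesis by auto
  qed simp
next
  assume "\<alpha> = 0 \<or> C = F"
  then show "diag_step \<alpha> A C F u = u" by (auto simp: diag_step_def)
qed

lemma novF_eq: "novF a b c d lam eta z1 z2 =
   ((\<lambda>y. nmul a z1 y + nmul b z2 y + nser lam z1 z2 y), (\<lambda>y. nmul d z2 y + nmul c z1 y + nser eta z1 z2 y))"
  by (simp add: novF_def nadd_def fun_eq_iff add_ac)

definition wclose :: "real \<Rightarrow> real \<Rightarrow> nov \<times> nov \<Rightarrow> nov \<times> nov \<Rightarrow> bool" where
  "wclose t r z w \<longleftrightarrow>
     val_ge (r - t) (\<lambda>x. fst z x - fst w x) \<and> val_ge r (\<lambda>x. snd z x - snd w x)"

lemma wclose_trans: "wclose t r x y \<Longrightarrow> wclose t r z y \<Longrightarrow> wclose t r x z"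
  using val_ge_diff[of "r - t" "\<lambda>v. fst x v - fst y v" "r - t" "\<lambda>v. fst z v - fst y v"]
    val_ge_diff[of r "\<lambda>v. snd x v - snd y v" r "\<lambda>v. snd z v - snd y v"]
  by (simp add: wclose_def)

lemma wclose_TLambda0:
  assumes "z \<in> TLambda0 e \<times> TLambda0 e" "w \<in> TLambda0 e \<times> TLambda0 e"
  shows "wclose t (e + min t 0) z w"
proof -
  have "val_ge e (\<lambda>x. fst z x - fst w x)" "val_ge e (\<lambda>x. snd z x - snd w x)"
    using val_ge_diff[of e "fst z" e "fst w"] val_ge_diff[of e "snd z" e "snd w"] assms
    by (simp_all add: TLambda0_iff mem_Times_iff)
  then show ?thesis unfolding wclose_def by (auto elim: val_ge_mono)
qed

lemma wclose_unbounded_eq: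
  assumes "\<kappa> > 0" "\<And>n. wclose t (r + real n * \<kappa>) z w"
  shows "z = w"
proof -
  have "val_ge (r - t + real n * \<kappa>) (\<lambda>x. fst z x - fst w x)"
    "val_ge (r + real n * \<kappa>) (\<lambda>x. snd z x - snd w x)" for n
    using assms(2)[of n] by (simp_all add: wclose_def algebra_simps)
  then have "fst z x - fst w x = 0" "snd z x - snd w x = 0" for x
    using val_ge_unbounded_zero[OF assms(1), of "r - t" "\<lambda>x. fst z x - fst w x" x]
      val_ge_unbounded_zero[OF assms(1), of r "\<lambda>x. snd z x - snd w x" x] by simp_all
  then show ?thesis by (simp add: prod_eq_iff fun_eq_iff)
qed

lemma wclose_funpow:
  assumes into: "\<And>z. z \<in> S \<Longrightarrow> \<Phi> z \<in> S"
    and contr: "\<And>z w r. z \<in> S \<Longrightarrow> w \<in> S \<Longrightarrow> wclose t r z w \<Longrightarrow>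
      wclose t (r + \<kappa>) (\<Phi> z) (\<Phi> w)"
    and "z \<in> S" "w \<in> S" "wclose t r z w"
  shows "wclose t (r + real n * \<kappa>) ((\<Phi> ^^ n) z) ((\<Phi> ^^ n) w)"
proof (induction n)
  case 0 then show ?case using assms(5) by simp
next
  case (Suc n)
  have "(\<Phi> ^^ n) z \<in> S" "(\<Phi> ^^ n) w \<in> S"
    using assms(3,4) into by (induction n) auto
  from contr[OF this Suc] show ?case by (simp add: algebra_simps)
qed

theorem weighted_contraction_unique_fixpoint:
  fixes \<Phi> :: "nov \<times> nov \<Rightarrow> nov \<times> nov"
  assumes "\<kappa> > 0"
    and into: "\<And>z. z \<in> TLambda0 e \<times> TLambda0 e \<Longrightarrow> \<Phi> z \<in> TLambda0 e \<times> TLambda0 e"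
    and contr: "\<And>z w r. z \<in> TLambda0 e \<times> TLambda0 e \<Longrightarrow> w \<in> TLambda0 e \<times> TLambda0 e \<Longrightarrow>
      wclose t r z w \<Longrightarrow> wclose t (r + \<kappa>) (\<Phi> z) (\<Phi> w)"
  shows "\<exists>!z. z \<in> TLambda0 e \<times> TLambda0 e \<and> \<Phi> z = z"
proof -
  let ?S = "TLambda0 e \<times> TLambda0 e"
  define r where "r = e + min t 0"
  have iter: "wclose t (r + real n * \<kappa>) ((\<Phi> ^^ n) z) ((\<Phi> ^^ n) w)"
    if "z \<in> ?S" "w \<in> ?S" "wclose t r z w" for z w r n
    by (rule wclose_funpow[where S = ?S]) (use into contr that in blast)+
  define z0 where "z0 = (nzero, nzero)"
  define zs where "zs n = (\<Phi> ^^ n) z0" for n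
  have z0: "z0 \<in> ?S"
    by (auto simp: z0_def TLambda0_iff nzero_def intro: val_ge_zero_fun)
  then have zs: "zs n \<in> ?S" for n
    unfolding zs_def by (induction n) (auto intro: into)
  have "wclose t (r + real n * \<kappa>) ((\<Phi> ^^ n) (\<Phi> z0)) ((\<Phi> ^^ n) z0)" for n
    using iter[OF into[OF z0] z0 wclose_TLambda0[OF into[OF z0] z0]] unfolding r_def .
  then have "wclose t (r + real n * \<kappa>) (zs (Suc n)) (zs n)" for n
    by (simp add: zs_def funpow_Suc_right del: funpow.simps)
  then have step: "val_ge (r - t + real n * \<kappa>) (\<lambda>x. fst (zs (Suc n)) x - fst (zs n) x)"
    "val_ge (r + real n * \<kappa>) (\<lambda>x. snd (zs (Suc n)) x - snd (zs n) x)" for n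
    by (simp_all add: wclose_def algebra_simps)
  obtain w1 where w1: "w1 \<in> TLambda0 e"
    "\<And>n. val_ge (r - t + real n * \<kappa>) (\<lambda>x. w1 x - fst (zs n) x)"
    by (rule novikov_geometric_limit[OF assms(1), of "\<lambda>n. fst (zs n)" e "r - t"])
      (use zs step in \<open>auto simp: mem_Times_iff\<close>)
  obtain w2 where w2: "w2 \<in> TLambda0 e"
    "\<And>n. val_ge (r + real n * \<kappa>) (\<lambda>x. w2 x - snd (zs n) x)"
    by (rule novikov_geometric_limit[OF assms(1), of "\<lambda>n. snd (zs n)" e r])
      (use zs step in \<open>auto simp: mem_Times_iff\<close>)
  let ?w = "(w1, w2)"
  have w_zs: "wclose t (r + real n * \<kappa>) ?w (zs n)" for n
    using w1 w2 by (simp add: wclose_def algebra_simps)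
  have "wclose t ((r + \<kappa>) + real n * \<kappa>) (\<Phi> ?w) ?w" for n
  proof (rule wclose_trans)
    show "wclose t (r + \<kappa> + real n * \<kappa>) (\<Phi> ?w) (zs (Suc n))"
      using contr[OF _ zs w_zs] w1 w2 by (simp add: zs_def algebra_simps)
    show "wclose t (r + \<kappa> + real n * \<kappa>) ?w (zs (Suc n))"
      using w_zs[of "Suc n"] by (simp add: algebra_simps)
  qed
  then have w_fixed: "\<Phi> ?w = ?w" by (rule wclose_unbounded_eq[OF assms(1)])
  show ?thesis
  proof (rule ex1I)
    show "?w \<in> ?S \<and> \<Phi> ?w = ?w" using w1 w2 w_fixed by simp
    fix z assume z: "z \<in> ?S \<and> \<Phi> z = z"
    have "(\<Phi> ^^ n) z = z" "(\<Phi> ^^ n) ?w = ?w" for n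
      using z w_fixed by (induction n) auto
    then have "wclose t (r + real n * \<kappa>) z ?w" for n
      using iter[of z ?w r n] z w1 w2 wclose_TLambda0[of z e ?w t] by (simp add: r_def)
    then show "z = ?w" by (rule wclose_unbounded_eq[OF assms(1)])
  qed
qed

lemma val_ge_normalized_minus_one:
  assumes "val_ge A f"
  shows "val_ge 0 (\<lambda>y. c * f (y + A) - none y)"
  using val_ge_diff[OF val_ge_shift[OF assms, of A c] val_ge_none] by simp

lemma novikov_normalized_gap:
  assumes "f \<in> novikov" "nval f = ereal A"
  obtains \<theta> where "\<theta> > 0" "val_ge \<theta> (\<lambda>y. (1 / f A) * f (y + A) - none y)"
proof -
  let ?g = "\<lambda>y. (1 / f A) * f (y + A) - none y"
  have lead: "f A \<noteq> 0" "val_ge A f" using nval_eq_ereal_leading[OF assms] by auto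
  have "?g \<in> novikov" by (intro novikov_diff novikov_shift assms(1) novikov_none)
  moreover have "val_ge 0 ?g" by (rule val_ge_normalized_minus_one[OF lead(2)])
  moreover have "?g 0 = 0" using lead(1) by (simp add: none_def)
  ultimately obtain \<theta> where "\<theta> > 0" "val_ge (0 + \<theta>) ?g" using novikov_val_ge_gap by blast
  then show ?thesis using that by simp
qed

lemma ereal_less_add_obtain_reals:
  fixes B C :: ereal
  assumes "ereal x < B + C" "ereal m \<le> B" "ereal m \<le> C"
  obtains \<beta> \<gamma> where "ereal \<beta> \<le> B" "ereal \<gamma> \<le> C" "m \<le> \<beta>" "m \<le> \<gamma>" "x < \<beta> + \<gamma>"
proof -
  define \<gamma>0 where "\<gamma>0 = (if C = \<infinity> then m else real_of_ereal C)"
  define \<beta> where "\<beta> = (if B = \<infinity> then max m (x - \<gamma>0 + 1) else real_of_ereal B)"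
  define \<gamma> where "\<gamma> = (if C = \<infinity> then max m (x - \<beta> + 1) else real_of_ereal C)"
  have "ereal \<beta> \<le> B \<and> ereal \<gamma> \<le> C \<and> m \<le> \<beta> \<and> m \<le> \<gamma> \<and> x < \<beta> + \<gamma>"
    using assms unfolding \<beta>_def \<gamma>_def \<gamma>0_def by (cases B; cases C) auto
  then show ?thesis using that by blast
qed

locale diag_dominant_system =
  fixes a b c d C1 C2 :: nov and lam eta :: "nat \<times> nat \<Rightarrow> nov" and e A D \<beta> \<gamma> :: real
  assumes e_pos: "e > 0"
    and novikov_data: "a \<in> novikov" "b \<in> novikov" "c \<in> novikov" "d \<in> novikov"
      "C1 \<in> novikov" "C2 \<in> novikov"
    and novikov_lam_eta: "\<And>v. 2 \<le> fst v + snd v \<Longrightarrow> lam v \<in> novikov \<and> eta v \<in> novikov"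
    and nval_a: "nval a = ereal A" and nval_d: "nval d = ereal D"
    and A_pos: "A > 0" and D_pos: "D > 0"
    and nval_b: "ereal \<beta> \<le> nval b" and nval_c: "ereal \<gamma> \<le> nval c"
    and diag_le: "A \<le> \<beta>" "D \<le> \<beta>" "A \<le> \<gamma>" "D \<le> \<gamma>"
    and diag_dominant: "A + D < \<beta> + \<gamma>"
    and nval_lam_eta: "\<And>v. 2 \<le> fst v + snd v \<Longrightarrow> nval (lam v) \<ge> nval a \<and> nval (eta v) \<ge> nval d"
    and nval_lam: "\<And>i j. 2 \<le> i + j \<Longrightarrow> j \<ge> 1 \<Longrightarrow> nval (lam (i, j)) \<ge> nval d"
    and nval_eta: "\<And>i j. 2 \<le> i + j \<Longrightarrow> i \<ge> 1 \<Longrightarrow> nval (eta (i, j)) \<ge> nval a"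
    and nval_C: "nval C1 > nval a + ereal e" "nval C2 > nval d + ereal e"
begin

lemma val_ge_data:
  "val_ge A a" "a A \<noteq> 0" "val_ge D d" "d D \<noteq> 0" "val_ge \<beta> b" "val_ge \<gamma> c"
  "val_ge (A + e) C1" "val_ge (D + e) C2"
  using nval_eq_ereal_leading[OF novikov_data(1) nval_a] nval_eq_ereal_leading[OF novikov_data(4) nval_d]
    nval_b nval_c nval_C less_imp_le[OF nval_C(1)] less_imp_le[OF nval_C(2)]
  by (auto simp: nval_a nval_d ereal_le_nval_iff[symmetric])

lemma val_ge_lam_eta:
  assumes "2 \<le> fst v + snd v"
  shows "val_ge A (lam v)" "val_ge D (eta v)"
    "1 \<le> fst v \<Longrightarrow> val_ge A (eta v)" "1 \<le> snd v \<Longrightarrow> val_ge D (lam v)"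
  using nval_lam_eta[OF assms] assms nval_eta[of "fst v" "snd v"] nval_lam[of "fst v" "snd v"]
  by (auto simp: nval_a nval_d ereal_le_nval_iff)

lemma novikov_val_ge_0_lam_eta:
  assumes "2 \<le> fst v + snd v"
  shows "lam v \<in> novikov \<and> val_ge 0 (lam v)" "eta v \<in> novikov \<and> val_ge 0 (eta v)"
  using novikov_lam_eta[OF assms] val_ge_lam_eta(1,2)[OF assms] A_pos D_pos
  by (auto elim: val_ge_mono)

definition step :: "nov \<times> nov \<Rightarrow> nov \<times> nov" where
  "step z = (diag_step (a A) A C1 (fst (novF a b c d lam eta (fst z) (snd z))) (fst z),
             diag_step (d D) D C2 (snd (novF a b c d lam eta (fst z) (snd z))) (snd z))"

lemma step_fixed_iff: "step z = z \<longleftrightarrow> novF a b c d lam eta (fst z) (snd z) = (C1, C2)"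
  using val_ge_data(2,4) by (auto simp: step_def diag_step_fixed_iff prod_eq_iff)

lemma step_TLambda0:
  assumes "z \<in> TLambda0 e \<times> TLambda0 e"
  shows "step z \<in> TLambda0 e \<times> TLambda0 e"
proof -
  obtain z1 z2 where z: "z = (z1, z2)" "z1 \<in> novikov" "z2 \<in> novikov" "val_ge e z1" "val_ge e z2"
    using assms by (cases z) (auto simp: TLambda0_iff)
  have nser: "nser lam z1 z2 \<in> novikov" "nser eta z1 z2 \<in> novikov"
    using novikov_nser[where lam = lam and P = 0] novikov_nser[where lam = eta and P = 0]
      novikov_val_ge_0_lam_eta e_pos z
    by blast+
  have nser_bound: "val_ge (A + 2 * e) (nser lam z1 z2)" "val_ge (D + 2 * e) (nser eta z1 z2)"
    using val_ge_nser[where lam = lam and P = A] val_ge_nser[where lam = eta and P = D]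
      val_ge_lam_eta(1,2) e_pos z
    by (simp_all add: less_imp_le)
  have gap: "val_ge 0 (\<lambda>y. (1 / a A) * a (y + A) - none y)"
    "val_ge 0 (\<lambda>y. (1 / d D) * d (y + D) - none y)"
    using val_ge_normalized_minus_one val_ge_data(1,3) by blast+
  have "val_ge e (fst (step z))"
    unfolding step_def novF_eq z(1) prod.sel
    by (rule val_ge_diag_step[OF novikov_data(1,2) z(2,3) gap(1) _ val_ge_data(5) diag_le(1)
          z(4,5) nser_bound(1) val_ge_data(7) e_pos]) simp
  moreover have "val_ge e (snd (step z))"
    unfolding step_def novF_eq z(1) prod.sel
    by (rule val_ge_diag_step[OF novikov_data(4,3) z(3,2) gap(2) _ val_ge_data(6) diag_le(4)
          z(5,4) nser_bound(2) val_ge_data(8) e_pos]) simp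
  moreover have "fst (step z) \<in> novikov" "snd (step z) \<in> novikov"
    using novikov_data z nser
    by (simp_all add: step_def novF_eq novikov_diag_step novikov_add novikov_nmul)
  ultimately show ?thesis by (simp add: TLambda0_iff mem_Times_iff)
qed

lemma val_ge_step_diff:
  assumes zw: "z \<in> TLambda0 e \<times> TLambda0 e" "w \<in> TLambda0 e \<times> TLambda0 e"
    and r: "val_ge r1 (\<lambda>x. fst z x - fst w x)" "val_ge r2 (\<lambda>x. snd z x - snd w x)"
    and gap_a: "val_ge \<theta>a (\<lambda>y. (1 / a A) * a (y + A) - none y)"
    and gap_d: "val_ge \<theta>d (\<lambda>y. (1 / d D) * d (y + D) - none y)"
  shows "val_ge (min (min (\<theta>a + r1) (\<beta> - A + r2)) (min (A + e + r1) (D + e + r2) - A))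
      (\<lambda>x. fst (step z) x - fst (step w) x)"
    "val_ge (min (min (\<theta>d + r2) (\<gamma> - D + r1)) (min (A + e + r1) (D + e + r2) - D))
      (\<lambda>x. snd (step z) x - snd (step w) x)"
proof -
  obtain z1 z2 w1 w2 where eq: "z = (z1, z2)" "w = (w1, w2)"
    and nov: "z1 \<in> novikov" "z2 \<in> novikov" "w1 \<in> novikov" "w2 \<in> novikov"
    and val: "val_ge e z1" "val_ge e z2" "val_ge e w1" "val_ge e w2"
    using zw by (cases z, cases w) (auto simp: TLambda0_iff)
  note r' = r[unfolded eq prod.sel]
  have nser_lam: "val_ge (min (A + e + r1) (D + e + r2)) (\<lambda>x. nser lam z1 z2 x - nser lam w1 w2 x)"
    by (rule val_ge_nser_diff[OF e_pos nov val r'])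
      (use novikov_val_ge_0_lam_eta val_ge_lam_eta in fastforce)+
  have nser_eta: "val_ge (min (A + e + r1) (D + e + r2)) (\<lambda>x. nser eta z1 z2 x - nser eta w1 w2 x)"
    by (rule val_ge_nser_diff[OF e_pos nov val r'])
      (use novikov_val_ge_0_lam_eta val_ge_lam_eta in fastforce)+
  show "val_ge (min (min (\<theta>a + r1) (\<beta> - A + r2)) (min (A + e + r1) (D + e + r2) - A))
      (\<lambda>x. fst (step z) x - fst (step w) x)"
    unfolding step_def novF_eq eq prod.sel
    by (rule val_ge_diag_step_diff[OF novikov_data(1,2) nov(1,3,2,4) gap_a val_ge_data(5) r' nser_lam])
  show "val_ge (min (min (\<theta>d + r2) (\<gamma> - D + r1)) (min (A + e + r1) (D + e + r2) - D))
      (\<lambda>x. snd (step z) x - snd (step w) x)"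
    unfolding step_def novF_eq eq prod.sel
    by (rule val_ge_diag_step_diff[OF novikov_data(4,3) nov(2,4,1,3) gap_d val_ge_data(6) r'(2,1)
          nser_eta])
qed

text \<open>Against the weight \<open>T\<^sup>-\<^sup>t\<close> on the first coordinate, \<open>b\<close> gains \<open>\<beta> - A + t\<close> and \<open>c\<close>
  gains \<open>\<gamma> - D - t\<close>; by \<open>A + D < \<beta> + \<gamma>\<close> both can be made positive.\<close>

lemma step_contracts:
  obtains \<kappa> t where "\<kappa> > 0"
    "\<And>z w r. z \<in> TLambda0 e \<times> TLambda0 e \<Longrightarrow> w \<in> TLambda0 e \<times> TLambda0 e \<Longrightarrow>
      wclose t r z w \<Longrightarrow> wclose t (r + \<kappa>) (step z) (step w)"
proof -
  obtain \<theta>a \<theta>d where gap: "\<theta>a > 0" "val_ge \<theta>a (\<lambda>y. (1 / a A) * a (y + A) - none y)"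
    "\<theta>d > 0" "val_ge \<theta>d (\<lambda>y. (1 / d D) * d (y + D) - none y)"
    using novikov_normalized_gap[OF novikov_data(1) nval_a] novikov_normalized_gap[OF novikov_data(4) nval_d]
    by metis
  define lo where "lo = max (A - \<beta>) (A - D - e)"
  define hi where "hi = min (\<gamma> - D) (A - D + e)"
  have "lo < hi" using diag_dominant diag_le e_pos by (auto simp: lo_def hi_def)
  define t where "t = (lo + hi) / 2"
  define \<kappa> where "\<kappa> = min (min \<theta>a \<theta>d) (min e ((hi - lo) / 2))"
  have "\<kappa> > 0" using gap \<open>lo < hi\<close> e_pos by (simp add: \<kappa>_def)
  have \<kappa>_le: "\<kappa> \<le> \<theta>a" "\<kappa> \<le> \<theta>d" "\<kappa> \<le> e" "\<kappa> \<le> (hi - lo) / 2"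
    unfolding \<kappa>_def by linarith+
  have lo_hi: "A - \<beta> \<le> lo" "A - D - e \<le> lo" "hi \<le> \<gamma> - D" "hi \<le> A - D + e"
    unfolding lo_def hi_def by auto
  have \<kappa>_t: "A - \<beta> + \<kappa> \<le> t" "A - D - e + \<kappa> \<le> t" "t + \<kappa> \<le> \<gamma> - D" "t + \<kappa> \<le> A - D + e"
    using \<kappa>_le(4) lo_hi unfolding t_def by (auto simp: field_simps)
  show ?thesis
  proof (rule that[OF \<open>\<kappa> > 0\<close>])
    fix z w r assume zw: "z \<in> TLambda0 e \<times> TLambda0 e" "w \<in> TLambda0 e \<times> TLambda0 e"
      and "wclose t r z w"
    then have r: "val_ge (r - t) (\<lambda>x. fst z x - fst w x)" "val_ge r (\<lambda>x. snd z x - snd w x)"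
      by (simp_all add: wclose_def)
    note diff = val_ge_step_diff[OF zw r gap(2,4)]
    show "wclose t (r + \<kappa>) (step z) (step w)"
      unfolding wclose_def
      using val_ge_mono[OF diff(1), of "r + \<kappa> - t"] val_ge_mono[OF diff(2), of "r + \<kappa>"] \<kappa>_le \<kappa>_t
      by (simp add: min_diff_distrib_left)
  qed
qed

theorem unique_solution:
  "\<exists>!z. z \<in> TLambda0 e \<times> TLambda0 e \<and> novF a b c d lam eta (fst z) (snd z) = (C1, C2)"
proof (rule step_contracts)
  fix \<kappa> t assume "\<kappa> > 0"
    and "\<And>z w r. z \<in> TLambda0 e \<times> TLambda0 e \<Longrightarrow> w \<in> TLambda0 e \<times> TLambda0 e \<Longrightarrow>
      wclose t r z w \<Longrightarrow> wclose t (r + \<kappa>) (step z) (step w)"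
  from weighted_contraction_unique_fixpoint[where \<Phi> = step, OF this(1) step_TLambda0 this(2)]
  show ?thesis by (simp add: step_fixed_iff)
qed

end

theorem lemmaA1:
  fixes e :: real and a b c d C1 C2 :: nov and lam eta :: "nat \<times> nat \<Rightarrow> nov"
  assumes "e > 0"
    and "a \<in> Lambda_plus" "b \<in> Lambda_plus" "c \<in> Lambda_plus" "d \<in> Lambda_plus"
    and "nadd (nmul a d) (\<lambda>x. - nmul b c x) \<noteq> nzero"
    and "nval a \<le> nval b" "nval a \<le> nval c" "nval d \<le> nval b" "nval d \<le> nval c"
    and "nval a + nval d < nval b + nval c"
    and "\<And>v. 2 \<le> fst v + snd v \<Longrightarrow> lam v \<in> novikov \<and> eta v \<in> novikov"
    and "\<And>v. 2 \<le> fst v + snd v \<Longrightarrow> nval (lam v) \<ge> nval a \<and> nval (eta v) \<ge> nval d"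
    and "\<And>i j. 2 \<le> i + j \<Longrightarrow> j \<ge> 1 \<Longrightarrow> nval (lam (i, j)) \<ge> nval d"
    and "\<And>i j. 2 \<le> i + j \<Longrightarrow> i \<ge> 1 \<Longrightarrow> nval (eta (i, j)) \<ge> nval a"
    and "C1 \<in> novikov" "C2 \<in> novikov"
    and "nval C1 > nval a + ereal e" "nval C2 > nval d + ereal e"
  shows "\<exists>!z. fst z \<in> TLambda0 e \<and> snd z \<in> TLambda0 e \<and>
           novF a b c d lam eta (fst z) (snd z) = (C1, C2)"
proof -
  have nov: "a \<in> novikov" "b \<in> novikov" "c \<in> novikov" "d \<in> novikov"
    and pos: "nval a > 0" "nval b > 0" "nval c > 0" "nval d > 0"
    using assms(2-5) by (auto simp: Lambda_plus_def)
  have "nval a \<noteq> \<infinity>" "nval d \<noteq> \<infinity>"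
    using assms(11) pos by auto
  then obtain A D where AD: "nval a = ereal A" "nval d = ereal D" "A > 0" "D > 0"
    using pos by (cases "nval a"; cases "nval d") auto
  obtain \<beta> \<gamma> where "ereal \<beta> \<le> nval b" "ereal \<gamma> \<le> nval c"
    "max A D \<le> \<beta>" "max A D \<le> \<gamma>" "A + D < \<beta> + \<gamma>"
    by (rule ereal_less_add_obtain_reals[of "A + D" "nval b" "nval c" "max A D"])
      (use assms(7-11) AD in auto)
  then interpret diag_dominant_system a b c d C1 C2 lam eta e A D \<beta> \<gamma>
    by unfold_locales (use assms nov AD in auto)
  show ?thesis using unique_solution by (simp add: mem_Times_iff)
qed

end
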